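(* For any $n\ge2$ and $A>0$, there exists $f\in C^2[-1,1]$ with $f\le0$ on $[-1,0]$ and $f\ge0$ on $[0,1]$, such that every algebraic polynomial $P_n$ of degree $\le n$ with $P_n\le0$ on $[-1,0]$, $P_n\ge0$ on $[0,1]$ and $P_n^{(i)}(0)=f^{(i)}(0)$ for $0\le i\le2$ obeys $$\|f-P_n\|>A\,\|f''\|.$$
   Context: $\|\cdot\|$ is the sup norm on $[-1,1]$. *)

theory Defs
  imports "HOL-Analysis.Analysis" "HOL-Computational_Algebra.Polynomial"
begin

definition supnorm :: "(real \<Rightarrow> real) \<Rightarrow> real" where
  "supnorm g = (SUP x\<in>{-1..1}. \<bar>g x\<bar>)"

definition C2_on_interval :: "(real \<Rightarrow> real) \<Rightarrow> (real \<Rightarrow> real) \<Rightarrow> (real \<Rightarrow> real) \<Rightarrow> bool" where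
  "C2_on_interval f f1 f2 \<longleftrightarrow>
     (\<forall>x\<in>{-1..1}. (f has_real_derivative f1 x) (at x within {-1..1})) \<and>
     (\<forall>x\<in>{-1..1}. (f1 has_real_derivative f2 x) (at x within {-1..1})) \<and>
     continuous_on {-1..1} f2"

end

theory Submission
  imports Defs
begin

text \<open>Take \<open>f(x) = e x + e\<^sup>2 x\<^sup>2 / (2 (e\<^sup>2 + x\<^sup>2))\<close> with small \<open>e > 0\<close>: it has the
  required signs, \<open>|f''| \<le> 1\<close>, and \<open>f(0) = 0\<close>, \<open>f'(0) = e\<close>, \<open>f''(0) = 1\<close>. Every admissible
  \<open>P\<close> is then \<open>e x + x\<^sup>2/2 + x\<^sup>3 r(x)\<close> with \<open>deg r \<le> n\<close>. At \<open>x = -4e\<close> the quadratic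
  part equals \<open>4e\<^sup>2 > 0\<close>, so \<open>P(-4e) \<le> 0\<close> forces \<open>r(-4e) \<ge> 1/(16e)\<close>. On the other hand
  \<open>|f - e x - x\<^sup>2/2| \<le> 1/2\<close>, so \<open>|x\<^sup>3 r(x)| \<le> \<parallel>f - P\<parallel> + 1/2\<close>; at the \<open>n + 1\<close> points
  \<open>-4e + j/(n+1)\<close>, all at distance at least \<open>1/(2(n+1))\<close> from \<open>0\<close>, this bounds \<open>r\<close>, and
  since the \<open>(n+1)\<close>-st forward difference of \<open>r\<close> vanishes, it bounds \<open>r(-4e)\<close> too.
  Hence \<open>\<parallel>f - P\<parallel> \<ge> c\<^sub>n/e - 1/2\<close>, which exceeds \<open>A\<close> for small \<open>e\<close>.\<close>

lemma degree_pcompose_shift_minus_le: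
  fixes p :: "'a::idom poly"
  assumes "degree p \<le> Suc k"
  shows "degree (p \<circ>\<^sub>p [:h, 1:] - p) \<le> k"
proof -
  have same_degree: "degree (p \<circ>\<^sub>p [:h, 1:]) = degree p"
    by (simp add: degree_pcompose)
  have "coeff (p \<circ>\<^sub>p [:h, 1:]) (Suc k) = coeff p (Suc k)"
  proof (cases "degree p = Suc k")
    case True
    then show ?thesis
      using lead_coeff_comp[of "[:h, 1:]" p] same_degree by simp
  qed (use assms same_degree in \<open>simp add: coeff_eq_0\<close>)
  then have "coeff (p \<circ>\<^sub>p [:h, 1:] - p) i = 0" if "k < i" for i
    using that assms same_degree
    by (cases "i = Suc k") (simp_all add: coeff_eq_0)
  then show ?thesis
    by (simp add: degree_le)
qed

lemma abs_poly_le_equispaced: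
  fixes p :: "real poly"
  assumes "degree p \<le> k" and "\<forall>j\<in>{1..k+1}. \<bar>poly p (a + real j * h)\<bar> \<le> M"
  shows "\<bar>poly p a\<bar> \<le> (2 ^ (k + 1) - 1) * M"
  using assms
proof (induction k arbitrary: p M)
  case 0
  then obtain c where "p = [:c:]"
    using degree0_coeffs by auto
  then show ?case
    using "0.prems"(2) by force
next
  case (Suc k)
  define q where "q = p \<circ>\<^sub>p [:h, 1:] - p"
  have poly_q: "poly q x = poly p (x + h) - poly p x" for x
    unfolding q_def by (simp add: poly_pcompose add.commute)
  have "degree q \<le> k"
    unfolding q_def using Suc.prems(1) by (rule degree_pcompose_shift_minus_le)
  moreover have "\<forall>j\<in>{1..k+1}. \<bar>poly q (a + real j * h)\<bar> \<le> 2 * M"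
  proof
    fix j assume j: "j \<in> {1..k+1}"
    have "\<bar>poly p (a + real (j + 1) * h)\<bar> \<le> M"
      using j by (intro Suc.prems(2)[rule_format]) auto
    moreover have "\<bar>poly p (a + real j * h)\<bar> \<le> M"
      using Suc.prems(2) j by auto
    ultimately show "\<bar>poly q (a + real j * h)\<bar> \<le> 2 * M"
      unfolding poly_q by (simp add: algebra_simps)
  qed
  ultimately have "\<bar>poly q a\<bar> \<le> (2 ^ (k + 1) - 1) * (2 * M)"
    by (rule Suc.IH)
  moreover have "\<bar>poly p (a + h)\<bar> \<le> M"
    using Suc.prems(2) by force
  ultimately show ?case
    using poly_q[of a] by (simp add: algebra_simps)
qed

lemma poly_taylor2_cube_remainder:
  fixes p :: "'a::field_char_0 poly"
  obtains r where "degree r \<le> degree p"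
    and "\<And>x. poly p x = poly p 0 + poly (pderiv p) 0 * x
                 + poly (pderiv (pderiv p)) 0 / 2 * x ^ 2 + x ^ 3 * poly r x"
proof -
  obtain a0 a1 a2 r where p: "p = pCons a0 (pCons a1 (pCons a2 r))"
    by (metis pCons_cases)
  have "degree r \<le> degree p"
    unfolding p by simp
  moreover have "poly p x = poly p 0 + poly (pderiv p) 0 * x
                 + poly (pderiv (pderiv p)) 0 / 2 * x ^ 2 + x ^ 3 * poly r x" for x
    unfolding p by (simp add: pderiv_pCons algebra_simps power2_eq_square power3_eq_cube)
  ultimately show thesis
    using that by blast
qed

lemma abs_poly_le_of_abs_cube_mult_le:
  fixes r :: "real poly"
  assumes "degree r \<le> n" and "-1 \<le> 2 * (real n + 1) * x0" and "x0 \<le> 0"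
    and "\<And>y. y \<in> {-1..1} \<Longrightarrow> \<bar>y ^ 3 * poly r y\<bar> \<le> B"
  shows "\<bar>poly r x0\<bar> \<le> (2 ^ (n + 1) - 1) * (8 * (real n + 1) ^ 3 * B)"
proof -
  define h where "h = 1 / (real n + 1)"
  have "\<bar>poly r (x0 + real j * h)\<bar> \<le> 8 * (real n + 1) ^ 3 * B" if j: "j \<in> {1..n+1}" for j
  proof -
    define y where "y = x0 + real j * h"
    have "h \<le> real j * h" "real j * h \<le> 1"
      using j by (auto simp: h_def field_simps)
    moreover have "- h / 2 \<le> x0"
      using assms(2) by (simp add: h_def field_simps)
    ultimately have "h / 2 \<le> y" "y \<le> 1"
      using assms(3) unfolding y_def by linarith+
    moreover have "h > 0"
      by (simp add: h_def)
    ultimately have y_in: "y \<in> {-1..1}" and "(h / 2) ^ 3 \<le> \<bar>y\<bar> ^ 3"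
      by (auto intro!: power_mono)
    then have "(h / 2) ^ 3 * \<bar>poly r y\<bar> \<le> \<bar>y ^ 3 * poly r y\<bar>"
      by (simp add: abs_mult power_abs mult_right_mono)
    also have "\<dots> \<le> B"
      using assms(4)[OF y_in] .
    finally have "(h / 2) ^ 3 * \<bar>poly r y\<bar> \<le> B" .
    moreover have "(h / 2) ^ 3 = 1 / (8 * (real n + 1) ^ 3)"
      by (simp add: h_def power_divide) (simp add: power3_eq_cube algebra_simps)
    ultimately have "\<bar>poly r y\<bar> / (8 * (real n + 1) ^ 3) \<le> B"
      by simp
    then show ?thesis
      by (simp add: y_def field_simps)
  qed
  then show ?thesis
    using abs_poly_le_equispaced[OF assms(1)] by blast
qed

lemma abs_le_supnorm:
  assumes "continuous_on {-1..1} g" and "x \<in> {-1..1}"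
  shows "\<bar>g x\<bar> \<le> supnorm g"
proof -
  have "bdd_above ((\<lambda>x. \<bar>g x\<bar>) ` {-1..1})"
    using assms(1) by (intro bounded_imp_bdd_above compact_imp_bounded compact_continuous_image
        continuous_intros compact_Icc)
  then show ?thesis
    unfolding supnorm_def by (rule cSUP_upper[OF assms(2)])
qed

lemma supnorm_le:
  assumes "\<And>x. x \<in> {-1..1} \<Longrightarrow> \<bar>g x\<bar> \<le> c"
  shows "supnorm g \<le> c"
  unfolding supnorm_def using assms by (intro cSUP_least) auto

definition test_fn :: "real \<Rightarrow> real \<Rightarrow> real" where
  "test_fn e x = e * x + e\<^sup>2 * x\<^sup>2 / (2 * (e\<^sup>2 + x\<^sup>2))"

definition test_fn1 :: "real \<Rightarrow> real \<Rightarrow> real" where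
  "test_fn1 e x = e + e ^ 4 * x / (e\<^sup>2 + x\<^sup>2)\<^sup>2"

definition test_fn2 :: "real \<Rightarrow> real \<Rightarrow> real" where
  "test_fn2 e x = e ^ 4 * (e\<^sup>2 - 3 * x\<^sup>2) / (e\<^sup>2 + x\<^sup>2) ^ 3"

lemma test_fn_at_0 [simp]:
  assumes "e \<noteq> 0"
  shows "test_fn e 0 = 0" and "test_fn1 e 0 = e" and "test_fn2 e 0 = 1"
  using assms by (simp_all add: test_fn_def test_fn1_def test_fn2_def power4_eq_xxxx power2_eq_square power3_eq_cube)

lemma test_fn_has_real_derivative:
  assumes "e \<noteq> 0"
  shows "(test_fn e has_real_derivative test_fn1 e x) (at x)"
proof -
  have pos: "e\<^sup>2 + x\<^sup>2 > 0"
    using assms by (simp add: add_pos_nonneg)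
  have "(test_fn e has_real_derivative
          e + (e\<^sup>2 * (2 * x) * (2 * (e\<^sup>2 + x\<^sup>2)) - e\<^sup>2 * x\<^sup>2 * (2 * (2 * x))) / (2 * (e\<^sup>2 + x\<^sup>2))\<^sup>2) (at x)"
    unfolding test_fn_def using pos
    by (auto intro!: derivative_eq_intros simp: power2_eq_square algebra_simps)
  moreover have "e + (e\<^sup>2 * (2 * x) * (2 * (e\<^sup>2 + x\<^sup>2)) - e\<^sup>2 * x\<^sup>2 * (2 * (2 * x))) / (2 * (e\<^sup>2 + x\<^sup>2))\<^sup>2
                 = test_fn1 e x"
  proof -
    have "e\<^sup>2 * (2 * x) * (2 * (e\<^sup>2 + x\<^sup>2)) - e\<^sup>2 * x\<^sup>2 * (2 * (2 * x)) = 4 * (e ^ 4 * x)"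
      by algebra
    moreover have "(2 * (e\<^sup>2 + x\<^sup>2))\<^sup>2 = 4 * (e\<^sup>2 + x\<^sup>2)\<^sup>2"
      by algebra
    ultimately show ?thesis
      unfolding test_fn1_def by simp
  qed
  ultimately show ?thesis
    by simp
qed

lemma test_fn1_has_real_derivative:
  assumes "e \<noteq> 0"
  shows "(test_fn1 e has_real_derivative test_fn2 e x) (at x)"
proof -
  have pos: "e\<^sup>2 + x\<^sup>2 > 0"
    using assms by (simp add: add_pos_nonneg)
  have "(test_fn1 e has_real_derivative
          (e ^ 4 * (e\<^sup>2 + x\<^sup>2)\<^sup>2 - e ^ 4 * x * (2 * (e\<^sup>2 + x\<^sup>2) * (2 * x))) / ((e\<^sup>2 + x\<^sup>2)\<^sup>2)\<^sup>2) (at x)"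
    unfolding test_fn1_def using pos mult_pos_pos[OF pos pos]
    by (auto intro!: derivative_eq_intros simp: power2_eq_square algebra_simps)
  moreover have "(e ^ 4 * (e\<^sup>2 + x\<^sup>2)\<^sup>2 - e ^ 4 * x * (2 * (e\<^sup>2 + x\<^sup>2) * (2 * x))) / ((e\<^sup>2 + x\<^sup>2)\<^sup>2)\<^sup>2
                 = test_fn2 e x"
  proof -
    have "e ^ 4 * (e\<^sup>2 + x\<^sup>2)\<^sup>2 - e ^ 4 * x * (2 * (e\<^sup>2 + x\<^sup>2) * (2 * x))
          = (e\<^sup>2 + x\<^sup>2) * (e ^ 4 * (e\<^sup>2 - 3 * x\<^sup>2))"
      by algebra
    moreover have "((e\<^sup>2 + x\<^sup>2)\<^sup>2)\<^sup>2 = (e\<^sup>2 + x\<^sup>2) * (e\<^sup>2 + x\<^sup>2) ^ 3"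
      by algebra
    ultimately show ?thesis
      using pos unfolding test_fn2_def by simp
  qed
  ultimately show ?thesis
    by simp
qed

lemma C2_on_interval_test_fn:
  assumes "e \<noteq> 0"
  shows "C2_on_interval (test_fn e) (test_fn1 e) (test_fn2 e)"
proof -
  have "e\<^sup>2 + x\<^sup>2 \<noteq> 0" for x
    using assms by (simp add: add_pos_nonneg)
  then have "continuous_on {-1..1} (test_fn2 e)"
    unfolding test_fn2_def by (intro continuous_intros) auto
  then show ?thesis
    unfolding C2_on_interval_def using assms
    by (auto intro: has_field_derivative_at_within test_fn_has_real_derivative test_fn1_has_real_derivative)
qed

lemma abs_test_fn2_le_1:
  assumes "e \<noteq> 0"
  shows "\<bar>test_fn2 e x\<bar> \<le> 1"
proof -
  define a u where "a = e\<^sup>2" and "u = x\<^sup>2"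
  have "a > 0" "u \<ge> 0"
    using assms by (simp_all add: a_def u_def)
  moreover have "(a + u) ^ 3 - a\<^sup>2 * (a - 3 * u) = 6 * a\<^sup>2 * u + 3 * a * u\<^sup>2 + u ^ 3"
    and "(a + u) ^ 3 + a\<^sup>2 * (a - 3 * u) = 2 * a ^ 3 + 3 * a * u\<^sup>2 + u ^ 3"
    by algebra+
  ultimately have "\<bar>a\<^sup>2 * (a - 3 * u)\<bar> \<le> (a + u) ^ 3"
    by (smt (verit) zero_le_power zero_le_mult_iff)
  moreover have "(a + u) ^ 3 > 0"
    using \<open>a > 0\<close> \<open>u \<ge> 0\<close> by simp
  moreover have "test_fn2 e x = a\<^sup>2 * (a - 3 * u) / (a + u) ^ 3"
    by (simp add: test_fn2_def a_def u_def flip: power_mult)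
  ultimately show ?thesis
    by (simp add: abs_divide)
qed

lemma test_fn_nonpos:
  assumes "e > 0" and "x \<le> 0"
  shows "test_fn e x \<le> 0"
proof -
  have pos: "e\<^sup>2 + x\<^sup>2 > 0"
    using assms by (simp add: add_pos_nonneg)
  have "2 * (e * \<bar>x\<bar>) \<le> e\<^sup>2 + x\<^sup>2"
    using sum_squares_bound[of e "\<bar>x\<bar>"] by simp
  then have "(e * \<bar>x\<bar>) * (e * \<bar>x\<bar>) \<le> (e * \<bar>x\<bar>) * (2 * (e\<^sup>2 + x\<^sup>2))"
    using assms(1) pos by (intro mult_left_mono) auto
  then have "e\<^sup>2 * x\<^sup>2 / (2 * (e\<^sup>2 + x\<^sup>2)) \<le> e * \<bar>x\<bar>"
    using pos by (simp add: divide_le_eq power2_eq_square algebra_simps)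
  then show ?thesis
    using assms(2) unfolding test_fn_def by simp
qed

lemma test_fn_nonneg:
  assumes "e \<ge> 0" and "x \<ge> 0"
  shows "test_fn e x \<ge> 0"
  using assms unfolding test_fn_def by simp

lemma abs_test_fn_minus_quadratic_le:
  assumes "e \<noteq> 0"
  shows "\<bar>test_fn e x - (e * x + x\<^sup>2 / 2)\<bar> \<le> x\<^sup>2 / 2"
proof -
  have pos: "e\<^sup>2 + x\<^sup>2 > 0"
    using assms by (simp add: add_pos_nonneg)
  have "e\<^sup>2 * x\<^sup>2 / (2 * (e\<^sup>2 + x\<^sup>2)) \<le> x\<^sup>2 / 2"
    using pos by (simp add: field_simps)
  then show ?thesis
    using pos unfolding test_fn_def by simp
qed

lemma supnorm_test_fn_minus_poly_lower_bound:
  fixes p :: "real poly"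
  assumes "e > 0" and "8 * e * (real n + 1) \<le> 1" and "degree p \<le> n"
    and "\<forall>x\<in>{-1..0}. poly p x \<le> 0"
    and "poly p 0 = test_fn e 0" and "poly (pderiv p) 0 = test_fn1 e 0"
    and "poly (pderiv (pderiv p)) 0 = test_fn2 e 0"
  shows "1 \<le> 16 * e * ((2 ^ (n + 1) - 1) * (8 * (real n + 1) ^ 3))
                  * (supnorm (\<lambda>x. test_fn e x - poly p x) + 1 / 2)"
proof -
  define D where "D = supnorm (\<lambda>x. test_fn e x - poly p x)"
  obtain r where "degree r \<le> degree p"
    and "\<And>x. poly p x = poly p 0 + poly (pderiv p) 0 * x
               + poly (pderiv (pderiv p)) 0 / 2 * x ^ 2 + x ^ 3 * poly r x"
    using poly_taylor2_cube_remainder[of p] by blast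
  then have deg_r: "degree r \<le> n"
    and poly_p: "\<And>x. poly p x = e * x + x\<^sup>2 / 2 + x ^ 3 * poly r x"
    using assms(1,3,5-7) by auto
  have "\<bar>y ^ 3 * poly r y\<bar> \<le> D + 1 / 2" if y: "y \<in> {-1..1}" for y
  proof -
    have "continuous_on {-1..1} (test_fn e)"
      using assms(1) by (intro continuous_at_imp_continuous_on ballI
          DERIV_isCont[OF test_fn_has_real_derivative]) simp
    then have "\<bar>test_fn e y - poly p y\<bar> \<le> D"
      unfolding D_def using y by (intro abs_le_supnorm continuous_intros) auto
    moreover have "\<bar>test_fn e y - (e * y + y\<^sup>2 / 2)\<bar> \<le> 1 / 2"
      using abs_test_fn_minus_quadratic_le[of e y] assms(1) y abs_square_le_1[of y] by auto
    ultimately show ?thesis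
      using poly_p[of y] by linarith
  qed
  then have upper: "\<bar>poly r (-4 * e)\<bar> \<le> (2 ^ (n + 1) - 1) * (8 * (real n + 1) ^ 3 * (D + 1 / 2))"
    using deg_r assms(1,2) by (intro abs_poly_le_of_abs_cube_mult_le) (auto simp: algebra_simps)
  have "1 \<le> 16 * e * poly r (-4 * e)"
  proof -
    have "-4 * e \<in> {-1..0}"
      using assms(1,2) by (simp add: distrib_left) (smt (verit) mult_nonneg_nonneg of_nat_0_le_iff)
    then have "poly p (-4 * e) \<le> 0"
      using assms(4) by blast
    moreover have "poly p (-4 * e) = 4 * e\<^sup>2 * (1 - 16 * e * poly r (-4 * e))"
      unfolding poly_p by (simp add: power2_eq_square power3_eq_cube algebra_simps)
    ultimately show ?thesis
      using assms(1) by (simp add: mult_le_0_iff)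
  qed
  also have "\<dots> \<le> 16 * e * ((2 ^ (n + 1) - 1) * (8 * (real n + 1) ^ 3 * (D + 1 / 2)))"
    using upper assms(1) by (intro mult_left_mono) auto
  finally show ?thesis
    unfolding D_def by (simp only: mult.assoc)
qed

lemma supnorm_test_fn_minus_poly_gt:
  fixes p :: "real poly" and n :: nat
  defines "K \<equiv> (2 ^ (n + 1) - 1) * (8 * (real n + 1) ^ 3)"
  assumes "e > 0" and "8 * e * (real n + 1) \<le> 1" and "16 * e * K * (A + 1) \<le> 1" and "A \<ge> 0"
    and "degree p \<le> n" and "\<forall>x\<in>{-1..0}. poly p x \<le> 0"
    and "poly p 0 = test_fn e 0" and "poly (pderiv p) 0 = test_fn1 e 0"
    and "poly (pderiv (pderiv p)) 0 = test_fn2 e 0"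
  shows "A * supnorm (test_fn2 e) < supnorm (\<lambda>x. test_fn e x - poly p x)"
proof -
  define D where "D = supnorm (\<lambda>x. test_fn e x - poly p x)"
  have "16 * e * K * (A + 1) \<le> 16 * e * K * (D + 1 / 2)"
    using supnorm_test_fn_minus_poly_lower_bound[OF assms(2,3,6-10)] assms(4)
    unfolding K_def D_def by linarith
  moreover have "(1::real) < 2 ^ (n + 1)"
    by (rule one_less_power) auto
  then have "16 * e * K > 0"
    using assms(2) unfolding K_def by simp
  ultimately have "A + 1 \<le> D + 1 / 2"
    by (metis mult_le_cancel_left_pos)
  moreover have "A * supnorm (test_fn2 e) \<le> A"
    using assms(2,5) abs_test_fn2_le_1 by (simp add: supnorm_le mult_left_le)
  ultimately show ?thesis
    unfolding D_def by simp
qed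

theorem lemma3p12:
  fixes n :: nat and A :: real
  assumes "n \<ge> 2" and "A > 0"
  shows "\<exists>f f1 f2. C2_on_interval f f1 f2 \<and>
           (\<forall>x\<in>{-1..0}. f x \<le> 0) \<and> (\<forall>x\<in>{0..1}. f x \<ge> 0) \<and>
           (\<forall>P :: real poly. degree P \<le> n \<and>
              (\<forall>x\<in>{-1..0}. poly P x \<le> 0) \<and> (\<forall>x\<in>{0..1}. poly P x \<ge> 0) \<and>
              poly P 0 = f 0 \<and> poly (pderiv P) 0 = f1 0 \<and>
              poly (pderiv (pderiv P)) 0 = f2 0
              \<longrightarrow> supnorm (\<lambda>x. f x - poly P x) > A * supnorm f2)"
proof -
  \<comment> \<open>The construction works for every \<open>n\<close>.\<close>
  define K :: real where "K = (2 ^ (n + 1) - 1) * (8 * (real n + 1) ^ 3)"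
  have "(1::real) < 2 ^ (n + 1)"
    by (rule one_less_power) auto
  then have "K > 0"
    unfolding K_def by simp
  define e where "e = min (1 / (8 * (real n + 1))) (1 / (16 * K * (A + 1)))"
  have "e \<le> 1 / (8 * (real n + 1))" "e \<le> 1 / (16 * K * (A + 1))"
    by (simp_all add: e_def)
  then have "e * (8 * (real n + 1)) \<le> 1" "e * (16 * K * (A + 1)) \<le> 1"
    using \<open>K > 0\<close> assms(2) by (simp_all add: pos_le_divide_eq)
  moreover have "e > 0"
    unfolding e_def using \<open>K > 0\<close> assms(2) by simp
  ultimately have e: "e > 0" "8 * e * (real n + 1) \<le> 1" "16 * e * K * (A + 1) \<le> 1"
    by (simp_all add: mult_ac)
  have "\<forall>x\<in>{-1..0}. test_fn e x \<le> 0" and "\<forall>x\<in>{0..1}. test_fn e x \<ge> 0"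
    using e(1) by (auto intro: test_fn_nonpos test_fn_nonneg)
  then show ?thesis
    using C2_on_interval_test_fn[of e] e assms(2)
      supnorm_test_fn_minus_poly_gt[of e n A, folded K_def]
    by (intro exI[of _ "test_fn e"] exI[of _ "test_fn1 e"] exI[of _ "test_fn2 e"]) auto
qed

end
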